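(* In the EnSolver setting described in the context (ensemble of $M$ base models, output domain of size $N_{\mathcal{S}}$, threshold $\tau$ with $M(1-\tau)$ a positive integer, and assumptions of independence and (A1)–(A3)), the right decision rate of the EnSolver $m$ satisfies $$R_{\text{rd}}(m) > \alpha \sum_{i = k}^{M}\binom{M}{i}\beta_{\text{min}}^i (1-\beta_{\text{max}})^{M-i} + (1-\alpha) - \mathcal{E}(M, N_{\mathcal{S}}, \tau),$$ where $k = M(1-\tau) + 1$.
   Context: Setting: $\mathcal{S}$ is a finite set of output strings with $N_{\mathcal{S}} = |\mathcal{S}| \ge 2$; inputs $x \in \mathcal{X}$ are drawn from a probability distribution $p$ on $\mathcal{X}$, each $x$ having a single correct output $s_x \in \mathcal{S}$. $\mathcal{X}$ is the disjoint union of the in-distribution set $\mathcal{X}^{\text{in}}$ and the out-of-distribution set $\mathcal{X}^{\text{out}}$, and $\alpha = p(x \in \mathcal{X}^{\text{in}})$. An ensemble consists of $M$ base models $m_1, \dots, m_M$, each of which produces a (random) prediction $m_i(x) \in \mathcal{S}$ on input $x$; probabilities are taken jointly over $x \sim p$ and the predictions, and the base models make their predictions independently of each other given the input (in particular conditionally on $x \in \mathcal{X}^{\text{in}}$ and conditionally on $x \in \mathcal{X}^{\text{out}}$). Let $\beta_i = p(m_i(x) = s_x \mid x \in \mathcal{X}^{\text{in}})$, $\beta_{\text{min}} = \min_i \beta_i$, $\beta_{\text{max}} = \max_i \beta_i$. Assumptions: (A1) $\beta_{\text{min}} > 1/N_{\mathcal{S}}$; (A2) for each $i$, conditionally on $x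 \in \mathcal{X}^{\text{in}}$, $m_i(x)$ equals each incorrect string $s \neq s_x$ with probability $(1-\beta_i)/(N_{\mathcal{S}}-1)$; (A3) for each $i$, conditionally on $x \in \mathcal{X}^{\text{out}}$, $m_i(x)$ equals each $s \in \mathcal{S}$ with probability $1/N_{\mathcal{S}}$. For $x$ and $s \in \mathcal{S}$, $n(x,s)$ is the number of base models with $m_i(x) = s$. The threshold $\tau \in (0,1]$ is such that $M(1-\tau)$ is a positive integer. The EnSolver $m$ acts as follows on input $x$: let $p_{\max} = \max_{s} n(x,s)/M$ and uncertainty $u = 1 - p_{\max}$; if $u < \tau$ it outputs a string $y$ maximizing $n(x,\cdot)$, otherwise it outputs a special skip symbol $s_{\text{skip}}$. The out-of-distribution error bound is $\mathcal{E}(M, N_{\mathcal{S}}, \tau) = \binom{M}{\lfloor M/2 \rfloor} (N_{\mathcal{S}})^{-M(1-\tau)}$. The right decision rate is $R_{\text{rd}}(m) = p(m(x) = s_x, x \in \mathcal{X}^{\text{in}}) + p(m(x) \in \{s_x, s_{\text{skip}}\}, x \in \mathcal{X}^{\text{out}})$. *)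

theory Defs
  imports "HOL-Probability.Probability"
begin

text \<open>Joint law of (input, vector of base-model predictions): the input x is drawn from p,
  and given x the M base models (indexed 0..M-1) predict independently, model i according
  to the distribution Q x i.\<close>
definition ens_dist :: "'x pmf \<Rightarrow> ('x \<Rightarrow> nat \<Rightarrow> 's pmf) \<Rightarrow> nat \<Rightarrow> ('x \<times> (nat \<Rightarrow> 's)) pmf" where
  "ens_dist p Q M = bind_pmf p (\<lambda>x. map_pmf (\<lambda>v. (x, v)) (Pi_pmf {..<M} undefined (Q x)))"

definition votes :: "nat \<Rightarrow> (nat \<Rightarrow> 's) \<Rightarrow> 's \<Rightarrow> nat" where
  "votes M v s = card {i. i < M \<and> v i = s}"

text \<open>The EnSolver decision rule; None is the skip symbol. Any tie-breaking among
  maximizers is allowed.\<close>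
definition ensolver_spec :: "'s set \<Rightarrow> nat \<Rightarrow> real \<Rightarrow> ('x \<Rightarrow> (nat \<Rightarrow> 's) \<Rightarrow> 's option) \<Rightarrow> bool" where
  "ensolver_spec S M \<tau> ens \<longleftrightarrow>
     (\<forall>x v. let pmax = real (Max (votes M v ` S)) / real M; u = 1 - pmax in
        (u < \<tau> \<longrightarrow> (\<exists>y\<in>S. ens x v = Some y \<and> (\<forall>s\<in>S. votes M v s \<le> votes M v y))) \<and>
        (\<not> u < \<tau> \<longrightarrow> ens x v = None))"

definition right_decision_rate ::
  "('x \<times> (nat \<Rightarrow> 's)) pmf \<Rightarrow> 'x set \<Rightarrow> ('x \<Rightarrow> 's) \<Rightarrow> ('x \<Rightarrow> (nat \<Rightarrow> 's) \<Rightarrow> 's option) \<Rightarrow> real" where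
  "right_decision_rate D Xin sx ens =
     measure_pmf.prob D {(x, v). x \<in> Xin \<and> ens x v = Some (sx x)} +
     measure_pmf.prob D {(x, v). x \<notin> Xin \<and> (ens x v = Some (sx x) \<or> ens x v = None)}"

definition ood_error_bound :: "nat \<Rightarrow> nat \<Rightarrow> real \<Rightarrow> real" where
  "ood_error_bound M N \<tau> = real (M choose (M div 2)) * real N powr (- (real M * (1 - \<tau>)))"

end

theory Submission
  imports Defs
begin

text \<open>
  Fix an input x and call a wrong string a rival if it gets more than K = M(1 - tau) votes.
  Without a rival the EnSolver outputs the correct string or skips, and it outputs the correct
  string as soon as the correct string also gets more than K votes. Under (A1)-(A3) each model
  puts probability at most 1/N on every wrong string, so a union bound over the N - 1 wrong
  strings and the (K + 1)-sets of models shows that a rival occurs with probability at most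
  (N - 1) C(M, K + 1) N^-(K + 1) < E(M, N, tau). For x in distribution, independence of the
  models bounds the probability that the correct string gets more than K votes from below by
  the binomial-type sum. Averaging over x gives the bound.
\<close>

lemma measure_pmf_prob_bind_pmf:
  "measure_pmf.prob (bind_pmf p f) A = (\<integral>x. measure_pmf.prob (f x) A \<partial>p)"
  unfolding measure_pmf_bind
  by (rule measure_pmf.measure_bind[where N="count_space UNIV"])
     (auto simp: space_subprob_algebra intro: prob_space_imp_subprob_space prob_space_measure_pmf)

lemma measure_pmf_prob_ens_dist:
  "measure_pmf.prob (ens_dist p Q M) A =
   (\<integral>x. measure_pmf.prob (Pi_pmf {..<M} undefined (Q x)) {v. (x, v) \<in> A} \<partial>p)"
  unfolding ens_dist_def measure_pmf_prob_bind_pmf by (simp add: vimage_def)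

lemma prob_ens_dist_ge:
  assumes "\<And>x. x \<in> set_pmf p \<Longrightarrow> x \<in> X \<Longrightarrow>
             a \<le> measure_pmf.prob (Pi_pmf {..<M} undefined (Q x)) {v. event x v}"
  shows "measure_pmf.prob p X * a \<le> measure_pmf.prob (ens_dist p Q M) {(x, v). x \<in> X \<and> event x v}"
proof -
  let ?P = "\<lambda>x. measure_pmf.prob (Pi_pmf {..<M} undefined (Q x)) {v. event x v}"
  have "measure_pmf.prob p X * a = (\<integral>x. indicator X x * a \<partial>p)"
    by simp
  also have "\<dots> \<le> (\<integral>x. indicator X x * ?P x \<partial>p)"
  proof (rule integral_mono_AE)
    show "integrable p (\<lambda>x. indicator X x * a)"
      by (rule measure_pmf.integrable_const_bound[where B="\<bar>a\<bar>"]) (auto simp: indicator_def)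
    show "integrable p (\<lambda>x. indicator X x * ?P x)"
      by (rule measure_pmf.integrable_const_bound[where B=1]) (auto simp: indicator_def)
    show "AE x in p. indicator X x * a \<le> indicator X x * ?P x"
      by (rule AE_pmfI) (simp add: indicator_def assms)
  qed
  also have "\<dots> = measure_pmf.prob (ens_dist p Q M) {(x, v). x \<in> X \<and> event x v}"
    unfolding measure_pmf_prob_ens_dist by (rule Bochner_Integration.integral_cong) (auto simp: indicator_def)
  finally show ?thesis .
qed

lemma measure_Pi_pmf_Pi_if:
  fixes M :: nat
  assumes "T \<subseteq> {..<M}"
  shows "measure_pmf.prob (Pi_pmf {..<M} d q) (Pi {..<M} (\<lambda>i. if i \<in> T then A else B)) =
         (\<Prod>i\<in>T. measure_pmf.prob (q i) A) * (\<Prod>i\<in>{..<M} - T. measure_pmf.prob (q i) B)"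
proof -
  have "measure_pmf.prob (Pi_pmf {..<M} d q) (Pi {..<M} (\<lambda>i. if i \<in> T then A else B)) =
        (\<Prod>i<M. if i \<in> T then measure_pmf.prob (q i) A else measure_pmf.prob (q i) B)"
    by (simp add: measure_Pi_pmf_Pi if_distrib)
  also have "\<dots> = (\<Prod>i\<in>T. measure_pmf.prob (q i) A) * (\<Prod>i\<in>{..<M} - T. measure_pmf.prob (q i) B)"
    using assms by (simp add: prod.If_cases Int_absorb1 Diff_eq)
  finally show ?thesis .
qed

lemma sum_subsets_by_card:
  assumes "finite A"
  shows "(\<Sum>T | T \<subseteq> A \<and> k \<le> card T. f (card T)) =
         (\<Sum>j = k..card A. of_nat (card A choose j) * (f j :: 'b :: comm_semiring_1))"
proof -
  have "{T. T \<subseteq> A \<and> k \<le> card T} = (\<Union>j\<in>{k..card A}. {T. T \<subseteq> A \<and> card T = j})"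
    using assms by (auto intro: card_mono)
  then have "(\<Sum>T | T \<subseteq> A \<and> k \<le> card T. f (card T)) =
             (\<Sum>j = k..card A. \<Sum>T | T \<subseteq> A \<and> card T = j. f (card T))"
    using assms by (simp only:) (rule sum.UNION_disjoint; auto intro: finite_subset[of _ "Pow A"])
  also have "\<dots> = (\<Sum>j = k..card A. of_nat (card A choose j) * f j)"
    using assms by (intro sum.cong refl) (simp add: n_subsets)
  finally show ?thesis .
qed

lemma prob_votes_at_least_le:
  fixes M :: nat
  assumes "\<And>i. i < M \<Longrightarrow> pmf (q i) s \<le> c"
  shows "measure_pmf.prob (Pi_pmf {..<M} d q) {v. k \<le> votes M v s} \<le> real (M choose k) * c ^ k"
proof -
  let ?P = "Pi_pmf {..<M} d q"
  let ?F = "{T. T \<subseteq> {..<M} \<and> card T = k}"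
  let ?X = "\<lambda>T. Pi {..<M} (\<lambda>i. if i \<in> T then {s} else UNIV)"
  have "{v. k \<le> votes M v s} \<subseteq> (\<Union>T\<in>?F. ?X T)"
  proof
    fix v assume "v \<in> {v. k \<le> votes M v s}"
    then obtain T where "T \<subseteq> {i. i < M \<and> v i = s}" "card T = k"
      unfolding votes_def by (auto elim: obtain_subset_with_card_n)
    then show "v \<in> (\<Union>T\<in>?F. ?X T)" by (intro UN_I[of T]) auto
  qed
  then have "measure_pmf.prob ?P {v. k \<le> votes M v s} \<le> measure_pmf.prob ?P (\<Union>T\<in>?F. ?X T)"
    by (rule measure_pmf.finite_measure_mono) simp
  also have "\<dots> \<le> (\<Sum>T\<in>?F. measure_pmf.prob ?P (?X T))"
    by (rule measure_pmf.finite_measure_subadditive_finite)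
       (auto intro: finite_subset[of _ "Pow {..<M}"])
  also have "\<dots> \<le> (\<Sum>T\<in>?F. c ^ k)"
  proof (rule sum_mono)
    fix T assume T: "T \<in> ?F"
    then have "measure_pmf.prob ?P (?X T) = (\<Prod>i\<in>T. pmf (q i) s)"
      by (simp add: measure_Pi_pmf_Pi_if measure_pmf_single)
    also have "\<dots> \<le> (\<Prod>i\<in>T. c)"
      using T assms by (intro prod_mono) auto
    finally show "measure_pmf.prob ?P (?X T) \<le> c ^ k"
      using T by simp
  qed
  also have "\<dots> = real (M choose k) * c ^ k"
    by (simp add: n_subsets)
  finally show ?thesis .
qed

lemma prob_votes_at_least_ge:
  fixes M :: nat
  assumes "\<And>i. i < M \<Longrightarrow> bmin \<le> pmf (q i) s \<and> pmf (q i) s \<le> bmax"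
    and "0 \<le> bmin" "bmax \<le> 1"
  shows "(\<Sum>j = k..M. real (M choose j) * bmin ^ j * (1 - bmax) ^ (M - j))
           \<le> measure_pmf.prob (Pi_pmf {..<M} d q) {v. k \<le> votes M v s}"
proof -
  let ?P = "Pi_pmf {..<M} d q"
  let ?F = "{T. T \<subseteq> {..<M} \<and> k \<le> card T}"
  let ?X = "\<lambda>T. Pi {..<M} (\<lambda>i. if i \<in> T then {s} else - {s})"
  have X_iff: "v \<in> ?X T \<longleftrightarrow> {i. i < M \<and> v i = s} = T" if "T \<subseteq> {..<M}" for v T
    using that by (auto simp: Pi_def)
  have "(\<Sum>j = k..M. real (M choose j) * bmin ^ j * (1 - bmax) ^ (M - j))
        = (\<Sum>T\<in>?F. bmin ^ card T * (1 - bmax) ^ (M - card T))"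
    using sum_subsets_by_card[of "{..<M}" "\<lambda>j. bmin ^ j * (1 - bmax) ^ (M - j)" k]
    by (simp add: mult.assoc)
  also have "\<dots> \<le> (\<Sum>T\<in>?F. measure_pmf.prob ?P (?X T))"
  proof (rule sum_mono)
    fix T assume T: "T \<in> ?F"
    have compl: "measure_pmf.prob (q i) (- {s}) = 1 - pmf (q i) s" for i
      using measure_pmf.prob_compl[of "{s}" "q i"]
      by (simp add: measure_pmf_single Compl_eq_Diff_UNIV)
    have "bmin ^ card T = (\<Prod>i\<in>T. bmin)"
      by simp
    also have "\<dots> \<le> (\<Prod>i\<in>T. measure_pmf.prob (q i) {s})"
      using T assms by (intro prod_mono) (auto simp: measure_pmf_single)
    finally have in_T: "bmin ^ card T \<le> (\<Prod>i\<in>T. measure_pmf.prob (q i) {s})" .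
    have "(1 - bmax) ^ (M - card T) = (\<Prod>i\<in>{..<M} - T. 1 - bmax)"
      using T by (simp add: card_Diff_subset finite_subset[of T "{..<M}"])
    also have "\<dots> \<le> (\<Prod>i\<in>{..<M} - T. measure_pmf.prob (q i) (- {s}))"
      using assms by (intro prod_mono) (auto simp: compl)
    finally have out_T: "(1 - bmax) ^ (M - card T) \<le> (\<Prod>i\<in>{..<M} - T. measure_pmf.prob (q i) (- {s}))" .
    show "bmin ^ card T * (1 - bmax) ^ (M - card T) \<le> measure_pmf.prob ?P (?X T)"
      unfolding measure_Pi_pmf_Pi_if[OF conjunct1[OF T[simplified]]]
      using in_T out_T assms(2,3) by (intro mult_mono prod_nonneg) auto
  qed
  also have "\<dots> = measure_pmf.prob ?P (\<Union>T\<in>?F. ?X T)"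
    using X_iff
    by (intro measure_pmf.finite_measure_finite_Union[symmetric])
       (auto intro: finite_subset[of _ "Pow {..<M}"] simp: disjoint_family_on_def)
  also have "\<dots> \<le> measure_pmf.prob ?P {v. k \<le> votes M v s}"
    using X_iff by (intro measure_pmf.finite_measure_mono) (auto simp: votes_def)
  finally show ?thesis .
qed

lemma prob_rival_votes_at_least_le:
  fixes M :: nat
  assumes "finite S" "s0 \<in> S" "\<And>i s. i < M \<Longrightarrow> s \<in> S - {s0} \<Longrightarrow> pmf (q i) s \<le> c"
  shows "measure_pmf.prob (Pi_pmf {..<M} d q) {v. \<exists>s\<in>S - {s0}. k \<le> votes M v s}
           \<le> real (card S - 1) * (real (M choose k) * c ^ k)"
proof -
  have "{v. \<exists>s\<in>S - {s0}. k \<le> votes M v s} = (\<Union>s\<in>S - {s0}. {v. k \<le> votes M v s})"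
    by blast
  also have "measure_pmf.prob (Pi_pmf {..<M} d q) \<dots>
        \<le> (\<Sum>s\<in>S - {s0}. measure_pmf.prob (Pi_pmf {..<M} d q) {v. k \<le> votes M v s})"
    using assms(1) by (intro measure_pmf.finite_measure_subadditive_finite) auto
  also have "\<dots> \<le> (\<Sum>s\<in>S - {s0}. real (M choose k) * c ^ k)"
    using assms(3) by (intro sum_mono prob_votes_at_least_le) auto
  also have "\<dots> = real (card S - 1) * (real (M choose k) * c ^ k)"
    using assms(1,2) by (simp add: card_Diff_singleton)
  finally show ?thesis .
qed

lemma below_threshold_iff:
  assumes "M > 0" "real M * (1 - \<tau>) = real K"
  shows "1 - real n / real M < \<tau> \<longleftrightarrow> K < n"
proof -
  have "1 - real n / real M < \<tau> \<longleftrightarrow> real M * (1 - \<tau>) < real n"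
    using assms(1) by (simp add: field_simps)
  then show ?thesis
    using assms(2) by simp
qed

context
  fixes S :: "'s set" and M K :: nat and \<tau> :: real and ens :: "'x \<Rightarrow> (nat \<Rightarrow> 's) \<Rightarrow> 's option"
  assumes ens: "ensolver_spec S M \<tau> ens" and S_finite: "finite S"
    and M_pos: "M > 0" and threshold: "real M * (1 - \<tau>) = real K"
begin

lemma ensolver_answers_iff:
  "ens x v \<noteq> None \<longleftrightarrow> (\<exists>s\<in>S. K < votes M v s)"
  and ensolver_answer_is_max:
  "ens x v = Some y \<Longrightarrow> y \<in> S \<and> (\<forall>s\<in>S. votes M v s \<le> votes M v y)"
proof -
  let ?mx = "Max (votes M v ` S)"
  have spec: "(K < ?mx \<longrightarrow> (\<exists>y\<in>S. ens x v = Some y \<and> (\<forall>s\<in>S. votes M v s \<le> votes M v y))) \<and>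
              (\<not> K < ?mx \<longrightarrow> ens x v = None)"
    using ens below_threshold_iff[OF M_pos threshold] unfolding ensolver_spec_def Let_def by metis
  show "ens x v \<noteq> None \<longleftrightarrow> (\<exists>s\<in>S. K < votes M v s)"
    using spec S_finite by (cases "S = {}") (auto simp: Max_gr_iff)
  show "y \<in> S \<and> (\<forall>s\<in>S. votes M v s \<le> votes M v y)" if "ens x v = Some y"
    using spec that by (cases "K < ?mx") auto
qed

lemma ensolver_answer_or_skip:
  assumes "\<forall>s\<in>S - {s0}. votes M v s \<le> K"
  shows "ens x v = Some s0 \<or> ens x v = None"
proof (cases "ens x v")
  case (Some y)
  obtain s where "s \<in> S" "K < votes M v s"
    using Some ensolver_answers_iff[of x v] by auto
  moreover have "y \<in> S" "votes M v s \<le> votes M v y"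
    using ensolver_answer_is_max[OF Some] \<open>s \<in> S\<close> by auto
  ultimately have "K < votes M v y" "y \<in> S"
    by auto
  then have "y = s0"
    using assms by (metis DiffI leD singletonD)
  then show ?thesis
    using Some by simp
qed simp

lemma prob_ensolver_answer_or_skip_ge:
  assumes "measure_pmf.prob P {v. \<exists>s\<in>S - {s0}. K < votes M v s} \<le> e"
  shows "1 - e \<le> measure_pmf.prob P {v. ens x v = Some s0 \<or> ens x v = None}"
proof -
  have "- {v. \<exists>s\<in>S - {s0}. K < votes M v s} \<subseteq> {v. ens x v = Some s0 \<or> ens x v = None}"
  proof
    fix v assume "v \<in> - {v. \<exists>s\<in>S - {s0}. K < votes M v s}"
    then have "\<forall>s\<in>S - {s0}. votes M v s \<le> K"
      by (auto simp: not_less)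
    from ensolver_answer_or_skip[OF this] show "v \<in> {v. ens x v = Some s0 \<or> ens x v = None}"
      by simp
  qed
  then have "measure_pmf.prob P (- {v. \<exists>s\<in>S - {s0}. K < votes M v s})
             \<le> measure_pmf.prob P {v. ens x v = Some s0 \<or> ens x v = None}"
    by (intro measure_pmf.finite_measure_mono) auto
  then show ?thesis
    using assms measure_pmf.prob_compl[of "{v. \<exists>s\<in>S - {s0}. K < votes M v s}" P]
    by (simp add: Compl_eq_Diff_UNIV)
qed

lemma prob_ensolver_correct_ge:
  assumes "s0 \<in> S" "measure_pmf.prob P {v. \<exists>s\<in>S - {s0}. K < votes M v s} \<le> e"
  shows "measure_pmf.prob P {v. K < votes M v s0} - e \<le> measure_pmf.prob P {v. ens x v = Some s0}"
proof -
  let ?C = "{v. K < votes M v s0}" and ?R = "{v. \<exists>s\<in>S - {s0}. K < votes M v s}"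
  have "?C - ?R \<subseteq> {v. ens x v = Some s0}"
  proof
    fix v assume v: "v \<in> ?C - ?R"
    then have "\<forall>s\<in>S - {s0}. votes M v s \<le> K"
      by (auto simp: not_less)
    then have "ens x v = Some s0 \<or> ens x v = None"
      by (rule ensolver_answer_or_skip)
    moreover have "ens x v \<noteq> None"
      using v ensolver_answers_iff[of x v] assms(1) by auto
    ultimately show "v \<in> {v. ens x v = Some s0}"
      by auto
  qed
  then have "measure_pmf.prob P (?C - ?R) \<le> measure_pmf.prob P {v. ens x v = Some s0}"
    by (intro measure_pmf.finite_measure_mono) auto
  moreover have "measure_pmf.prob P ?C - measure_pmf.prob P ?R \<le> measure_pmf.prob P (?C - ?R)"
    using measure_pmf.finite_measure_Diff'[of ?C P ?R] measure_pmf.finite_measure_mono[of "?C \<inter> ?R" ?R P]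
    by simp
  ultimately show ?thesis
    using assms(2) by linarith
qed

end

lemma uniform_error_le_inverse:
  fixes N b :: real
  assumes "N \<ge> 2" "1 / N < b"
  shows "(1 - b) / (N - 1) \<le> 1 / N"
proof -
  have "1 \<le> N * b"
    using assms by (simp add: field_simps)
  then show ?thesis
    using assms(1) by (simp add: field_simps)
qed

lemma pmf_eq_if_uniform_elsewhere:
  assumes "finite S" "set_pmf q \<subseteq> S" "s0 \<in> S" "card S \<ge> 2"
    and "\<And>s. s \<in> S - {s0} \<Longrightarrow> pmf q s = (1 - b) / (real (card S) - 1)"
  shows "pmf q s0 = b"
proof -
  have "1 = (\<Sum>s\<in>S. pmf q s)"
    using sum_pmf_eq_1[OF assms(1,2)] by simp
  also have "\<dots> = pmf q s0 + (\<Sum>s\<in>S - {s0}. (1 - b) / (real (card S) - 1))"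
    using assms by (simp add: sum.remove)
  also have "\<dots> = pmf q s0 + (1 - b)"
    using assms(1,3,4) by (simp add: card_Diff_singleton of_nat_diff)
  finally show ?thesis
    by simp
qed

lemma rival_bound_lt_ood_error_bound:
  assumes "N \<ge> 2" "K < M" "real M * (1 - \<tau>) = real K"
  shows "real (N - 1) * (real (M choose (K + 1)) * (1 / real N) ^ (K + 1)) < ood_error_bound M N \<tau>"
proof -
  have "real (N - 1) * (real (M choose (K + 1)) * (1 / real N) ^ (K + 1))
        = (real N - 1) / real N * (real (M choose (K + 1)) / real N ^ K)"
    using assms(1) by (simp add: of_nat_diff power_divide field_simps)
  also have "\<dots> < real (M choose (K + 1)) / real N ^ K"
    using assms(1,2) by (simp add: field_simps)
  also have "\<dots> \<le> real (M choose (M div 2)) / real N ^ K"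
    using assms(1) binomial_maximum[of M "K + 1"] by (simp add: divide_right_mono)
  also have "\<dots> = ood_error_bound M N \<tau>"
    using assms(1) unfolding ood_error_bound_def assms(3)
    by (simp add: powr_minus powr_realpow divide_inverse)
  finally show ?thesis .
qed

locale ensolver_setting =
  fixes S :: "'s set" and p :: "'x pmf" and Xin :: "'x set" and sx :: "'x \<Rightarrow> 's"
    and Q :: "'x \<Rightarrow> nat \<Rightarrow> 's pmf" and M :: nat and \<tau> :: real and K :: nat
    and \<beta> :: "nat \<Rightarrow> real" and ens :: "'x \<Rightarrow> (nat \<Rightarrow> 's) \<Rightarrow> 's option"
  assumes S_finite: "finite S" and card_S_ge: "card S \<ge> 2"
    and sx_in_S: "sx x \<in> S"
    and Q_in_S: "i < M \<Longrightarrow> set_pmf (Q x i) \<subseteq> S"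
    and tau_pos: "0 < \<tau>"
    and K_pos: "K \<ge> 1" and threshold: "real M * (1 - \<tau>) = real K"
    and Min_\<beta>_gt: "1 / real (card S) < Min (\<beta> ` {..<M})"
    and in_distribution_errors: "\<lbrakk>i < M; x \<in> set_pmf p; x \<in> Xin; s \<in> S - {sx x}\<rbrakk> \<Longrightarrow>
                   pmf (Q x i) s = (1 - \<beta> i) / (real (card S) - 1)"
    and out_of_distribution_uniform: "\<lbrakk>i < M; x \<in> set_pmf p; x \<notin> Xin; s \<in> S\<rbrakk> \<Longrightarrow>
                   pmf (Q x i) s = 1 / real (card S)"
    and ens: "ensolver_spec S M \<tau> ens"
begin

abbreviation predictions :: "'x \<Rightarrow> (nat \<Rightarrow> 's) pmf" where
  "predictions x \<equiv> Pi_pmf {..<M} undefined (Q x)"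

definition rival_bound :: real where
  "rival_bound = real (card S - 1) * (real (M choose (K + 1)) * (1 / real (card S)) ^ (K + 1))"

definition correct_bound :: real where
  "correct_bound =
     (\<Sum>i = K + 1..M. real (M choose i) * Min (\<beta> ` {..<M}) ^ i * (1 - Max (\<beta> ` {..<M})) ^ (M - i))"

lemma M_pos: "M > 0"
  using K_pos threshold by (intro Nat.gr0I) auto

lemma K_less_M: "K < M"
proof -
  have "real M * (1 - \<tau>) < real M"
    using tau_pos M_pos by simp
  then show ?thesis
    using threshold by simp
qed

lemma pmf_wrong_le:
  assumes "x \<in> set_pmf p" "i < M" "s \<in> S - {sx x}"
  shows "pmf (Q x i) s \<le> 1 / real (card S)"
proof (cases "x \<in> Xin")
  case True
  have "Min (\<beta> ` {..<M}) \<le> \<beta> i"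
    using assms(2) by simp
  then have "1 / real (card S) < \<beta> i"
    using Min_\<beta>_gt by linarith
  then show ?thesis
    using in_distribution_errors[OF assms(2,1) True assms(3)] card_S_ge uniform_error_le_inverse by simp
qed (use assms out_of_distribution_uniform in auto)

lemma pmf_correct_eq:
  assumes "x \<in> set_pmf p" "x \<in> Xin" "i < M"
  shows "pmf (Q x i) (sx x) = \<beta> i"
  using S_finite Q_in_S[OF assms(3)] sx_in_S card_S_ge in_distribution_errors[OF assms(3,1,2)]
  by (rule pmf_eq_if_uniform_elsewhere)

lemma prob_rival_le:
  assumes "x \<in> set_pmf p"
  shows "measure_pmf.prob (predictions x) {v. \<exists>s\<in>S - {sx x}. K < votes M v s} \<le> rival_bound"
  using prob_rival_votes_at_least_le[where q="Q x" and d=undefined and k="K + 1",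
          OF S_finite sx_in_S pmf_wrong_le[OF assms]]
  unfolding rival_bound_def by (simp add: Suc_le_eq)

lemma prob_correct_ge:
  assumes "x \<in> set_pmf p" "x \<in> Xin"
  shows "correct_bound - rival_bound \<le> measure_pmf.prob (predictions x) {v. ens x v = Some (sx x)}"
proof -
  have "0 < 1 / real (card S)"
    using card_S_ge by simp
  then have Min_nonneg: "0 \<le> Min (\<beta> ` {..<M})"
    using Min_\<beta>_gt by linarith
  have "\<beta> i \<le> 1" if "i < M" for i
    using pmf_correct_eq[OF assms that] pmf_le_1 by metis
  then have Max_le_1: "Max (\<beta> ` {..<M}) \<le> 1"
    using M_pos by (subst Max_le_iff) auto
  have "correct_bound \<le> measure_pmf.prob (predictions x) {v. K + 1 \<le> votes M v (sx x)}"
    unfolding correct_bound_def using pmf_correct_eq[OF assms] Min_nonneg Max_le_1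
    by (intro prob_votes_at_least_ge) auto
  then show ?thesis
    using prob_ensolver_correct_ge[where x=x, OF ens S_finite M_pos threshold sx_in_S prob_rival_le[OF assms(1)]]
    by (simp add: Suc_le_eq)
qed

lemma prob_answer_or_skip_ge:
  assumes "x \<in> set_pmf p"
  shows "1 - rival_bound \<le> measure_pmf.prob (predictions x) {v. ens x v = Some (sx x) \<or> ens x v = None}"
  using prob_ensolver_answer_or_skip_ge[where x=x, OF ens S_finite M_pos threshold prob_rival_le[OF assms]] .

lemma right_decision_rate_ge:
  defines "\<alpha> \<equiv> measure_pmf.prob p Xin"
  shows "\<alpha> * (correct_bound - rival_bound) + (1 - \<alpha>) * (1 - rival_bound)
           \<le> right_decision_rate (ens_dist p Q M) Xin sx ens"
proof -
  have "\<alpha> * (correct_bound - rival_bound)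
          \<le> measure_pmf.prob (ens_dist p Q M) {(x, v). x \<in> Xin \<and> ens x v = Some (sx x)}"
    unfolding \<alpha>_def by (rule prob_ens_dist_ge) (rule prob_correct_ge)
  moreover have "measure_pmf.prob p (- Xin) * (1 - rival_bound) \<le> measure_pmf.prob (ens_dist p Q M)
                   {(x, v). x \<in> - Xin \<and> (ens x v = Some (sx x) \<or> ens x v = None)}"
    by (rule prob_ens_dist_ge) (rule prob_answer_or_skip_ge)
  moreover have "measure_pmf.prob p (- Xin) = 1 - \<alpha>"
    unfolding \<alpha>_def using measure_pmf.prob_compl[of Xin p] by (simp add: Compl_eq_Diff_UNIV)
  ultimately show ?thesis
    unfolding right_decision_rate_def by simp
qed

lemma rival_bound_lt: "rival_bound < ood_error_bound M (card S) \<tau>"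
  unfolding rival_bound_def using rival_bound_lt_ood_error_bound card_S_ge K_less_M threshold .

end

theorem theorem1:
  fixes S :: "'s set" and p :: "'x pmf" and Xin :: "'x set" and sx :: "'x \<Rightarrow> 's"
    and Q :: "'x \<Rightarrow> nat \<Rightarrow> 's pmf" and M :: nat and \<tau> :: real and K :: nat
    and \<beta> :: "nat \<Rightarrow> real" and ens :: "'x \<Rightarrow> (nat \<Rightarrow> 's) \<Rightarrow> 's option"
  defines "N \<equiv> card S"
    and "D \<equiv> ens_dist p Q M"
    and "\<alpha> \<equiv> measure_pmf.prob p Xin"
    and "\<beta>min \<equiv> Min (\<beta> ` {..<M})"
    and "\<beta>max \<equiv> Max (\<beta> ` {..<M})"
  assumes S_fin: "finite S" and N_ge: "N \<ge> 2"
    and sx_S: "\<forall>x. sx x \<in> S"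
    and Q_S: "\<forall>x. \<forall>i<M. set_pmf (Q x i) \<subseteq> S"
    and tau: "0 < \<tau>" "\<tau> \<le> 1"
    and K: "K \<ge> 1" "real M * (1 - \<tau>) = real K"
    and beta_def: "\<forall>i<M. measure_pmf.prob D {(x, v). x \<in> Xin \<and> v i = sx x} = \<beta> i * \<alpha>"
    and A1: "\<beta>min > 1 / real N"
    and A2: "\<forall>i<M. \<forall>x\<in>set_pmf p. x \<in> Xin \<longrightarrow>
               (\<forall>s\<in>S. s \<noteq> sx x \<longrightarrow> pmf (Q x i) s = (1 - \<beta> i) / (real N - 1))"
    and A3: "\<forall>i<M. \<forall>x\<in>set_pmf p. x \<notin> Xin \<longrightarrow> (\<forall>s\<in>S. pmf (Q x i) s = 1 / real N)"
    and ens: "ensolver_spec S M \<tau> ens"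
  shows "right_decision_rate D Xin sx ens >
           \<alpha> * (\<Sum>i = K + 1..M. real (M choose i) * \<beta>min ^ i * (1 - \<beta>max) ^ (M - i))
           + (1 - \<alpha>) - ood_error_bound M N \<tau>"
proof -
  interpret ensolver_setting S p Xin sx Q M \<tau> K \<beta> ens
    using S_fin N_ge sx_S Q_S tau(1) K A1 A2 A3 ens unfolding N_def \<beta>min_def by unfold_locales auto
  show ?thesis
    using right_decision_rate_ge rival_bound_lt
    unfolding correct_bound_def D_def \<alpha>_def \<beta>min_def \<beta>max_def N_def by (simp add: algebra_simps)
qed

end
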